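(* Let $\psi$ be a function analytic on $D_{s,\alpha}$, with $s>0$ and $\alpha\in(\pi/2,\pi]$. Assume that there exists $c>0$ such that $\psi(z)\sim -c\,z\ln z$ as $z$ tends to $0$ in $D_{s,\alpha}$. Then for every $\beta\in(0,\alpha)$ there exist $\rho\in(0,s)$, $\rho'>0$ and a function $\Upsilon$ analytic on $D_{\rho',\beta}$ with values in $D_{\rho,\alpha}$ such that $$\forall (y,z)\in D_{\rho',\beta}\times D_{\rho,\alpha},\qquad \psi(z)=y\iff z=\Upsilon(y).$$ Moreover, as $y$ tends to $0$ in $D_{\rho',\beta}$, $$\Upsilon(y)\sim-\frac{y}{c\ln y}.$$
   Context: For $\rho>0$ and $\alpha\in(0,\pi]$, $D_{\rho,\alpha}=\{re^{i\theta}: r\in(0,\rho),\ |\theta|<\alpha\}$. $\ln$ denotes the principal determination of the logarithm (on $\mathbb C\setminus(-\infty,0]$). *)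

theory Defs
  imports "HOL-Complex_Analysis.Complex_Analysis" "HOL-Library.Landau_Symbols"
begin

definition sector :: "real \<Rightarrow> real \<Rightarrow> complex set" where
  "sector \<rho> \<alpha> = {complex_of_real r * exp (\<i> * complex_of_real \<theta>) | r \<theta>.
      0 < r \<and> r < \<rho> \<and> \<bar>\<theta>\<bar> < \<alpha>}"

end

theory Submission
  imports Defs "HOL-Real_Asymp.Real_Asymp"
begin

(*
  In the coordinate z = exp u the sector D_{s,alpha} becomes the half-strip Re u < ln s,
  |Im u| < alpha, and the equation psi z = y becomes F u = Ln y with
  F u = u + ln c + Ln (- u) + Ln (H u), where H u = psi (exp u) / (- c * exp u * u) tends to 1
  uniformly as Re u tends to -infinity. Far to the left F - id is 1/2-Lipschitz (Cauchy's estimate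
  for Ln o H, and 1/|u| bounds the derivative of Ln (- u)), so F is injective, and Banach's fixed
  point theorem started at w - ln c - Ln (- w) gives a preimage of every w in a slightly thinner
  half-strip, at distance O(ln |Re w|) from w. Then Upsilon y = exp (F^-1 (Ln y)) is holomorphic by
  the inverse function theorem, the ambiguity 2 pi i n of the logarithm is excluded by comparing
  imaginary parts, and F^-1 (w) / w -> 1 together with H -> 1 gives the asymptotics.
*)

definition half_strip :: "real \<Rightarrow> real \<Rightarrow> complex set" where
  "half_strip a b = {u. Re u < a \<and> \<bar>Im u\<bar> < b}"

lemma half_strip_eq: "half_strip a b = {u. Re u < a} \<inter> {u. Im u < b} \<inter> {u. Im u > - b}"
  by (auto simp: half_strip_def)

lemma open_half_strip: "open (half_strip a b)"
  unfolding half_strip_eq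
  by (intro open_Int open_halfspace_Re_lt open_halfspace_Im_lt open_halfspace_Im_gt)

lemma convex_half_strip: "convex (half_strip a b)"
  unfolding half_strip_eq
  by (intro convex_Int convex_halfspace_Re_lt convex_halfspace_Im_lt convex_halfspace_Im_gt)

lemma half_strip_mono: "a \<le> a' \<Longrightarrow> b \<le> b' \<Longrightarrow> half_strip a b \<subseteq> half_strip a' b'"
  by (auto simp: half_strip_def)

lemma cball_subset_half_strip:
  assumes "u \<in> half_strip (a - r) (b - r)"
  shows "cball u r \<subseteq> half_strip a b"
proof
  fix v assume "v \<in> cball u r"
  hence "norm (v - u) \<le> r" by (simp add: dist_norm norm_minus_commute)
  hence "\<bar>Re (v - u)\<bar> \<le> r" "\<bar>Im (v - u)\<bar> \<le> r"
    using abs_Re_le_cmod abs_Im_le_cmod order_trans by blast+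
  thus "v \<in> half_strip a b" using assms by (auto simp: half_strip_def)
qed

lemma mem_sector_iff:
  assumes "\<alpha> \<le> pi"
  shows "z \<in> sector \<rho> \<alpha> \<longleftrightarrow> z \<noteq> 0 \<and> norm z < \<rho> \<and> \<bar>Im (Ln z)\<bar> < \<alpha>"
proof
  assume "z \<in> sector \<rho> \<alpha>"
  then obtain r \<theta> where z: "z = complex_of_real r * exp (\<i> * complex_of_real \<theta>)"
    and r: "0 < r" "r < \<rho>" and \<theta>: "\<bar>\<theta>\<bar> < \<alpha>" unfolding sector_def by auto
  have "Complex (ln r) \<theta> = complex_of_real (ln r) + \<i> * complex_of_real \<theta>"
    by (simp add: complex_eq_iff)
  hence "z = exp (Complex (ln r) \<theta>)"
    using r by (simp add: z exp_add exp_of_real)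
  hence "Ln z = Complex (ln r) \<theta>" using \<theta> assms by (intro Ln_unique) auto
  moreover have "norm z = r" using r by (simp add: z norm_mult)
  ultimately show "z \<noteq> 0 \<and> norm z < \<rho> \<and> \<bar>Im (Ln z)\<bar> < \<alpha>" using r \<theta> by auto
next
  assume z: "z \<noteq> 0 \<and> norm z < \<rho> \<and> \<bar>Im (Ln z)\<bar> < \<alpha>"
  have "z = exp (Ln z)" using z by simp
  also have "Ln z = complex_of_real (ln (norm z)) + \<i> * complex_of_real (Im (Ln z))"
    using z by (simp add: complex_eq_iff)
  finally have "z = complex_of_real (norm z) * exp (\<i> * complex_of_real (Im (Ln z)))"
    using z by (simp add: exp_add exp_of_real)
  thus "z \<in> sector \<rho> \<alpha>" unfolding sector_def using z by force
qed

lemma Ln_mem_half_strip: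
  assumes "z \<in> sector \<rho> \<alpha>" "\<alpha> \<le> pi"
  shows "Ln z \<in> half_strip (ln \<rho>) \<alpha>"
proof -
  have "z \<noteq> 0" "norm z < \<rho>" "\<bar>Im (Ln z)\<bar> < \<alpha>" using assms by (auto simp: mem_sector_iff)
  moreover from this have "ln (norm z) < ln \<rho>"
    by (subst ln_less_cancel_iff) (auto intro: le_less_trans[OF norm_ge_zero])
  ultimately show ?thesis by (simp add: half_strip_def)
qed

lemma exp_mem_sector:
  assumes "u \<in> half_strip (ln \<rho>) \<alpha>" "\<alpha> \<le> pi" "0 < \<rho>"
  shows "exp u \<in> sector \<rho> \<alpha>"
proof -
  have "Ln (exp u) = u" using assms by (intro Ln_exp) (auto simp: half_strip_def)
  thus ?thesis
    using assms by (auto simp: mem_sector_iff half_strip_def) (metis exp_less_cancel_iff exp_ln)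
qed

lemma sector_not_nonpos_Reals:
  assumes "z \<in> sector \<rho> \<alpha>" "\<alpha> \<le> pi"
  shows "z \<notin> \<real>\<^sub>\<le>\<^sub>0"
proof
  assume "z \<in> \<real>\<^sub>\<le>\<^sub>0"
  moreover have "z \<noteq> 0" "\<bar>Im (Ln z)\<bar> < \<alpha>" using assms by (auto simp: mem_sector_iff)
  ultimately have "Re z < 0" "Im z = 0" by (auto simp: complex_nonpos_Reals_iff complex_eq_iff)
  hence "Im (Ln z) = pi" using \<open>z \<noteq> 0\<close> by (simp add: Im_Ln_eq_pi)
  thus False using \<open>\<bar>Im (Ln z)\<bar> < \<alpha>\<close> assms(2) by simp
qed

lemma open_sector:
  assumes "\<alpha> \<le> pi"
  shows "open (sector \<rho> \<alpha>)"
proof (cases "0 < \<rho>")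
  case True
  have "sector \<rho> \<alpha> = exp ` half_strip (ln \<rho>) \<alpha>"
  proof
    show "sector \<rho> \<alpha> \<subseteq> exp ` half_strip (ln \<rho>) \<alpha>"
    proof
      fix z assume "z \<in> sector \<rho> \<alpha>"
      moreover from this have "z = exp (Ln z)" using assms by (simp add: mem_sector_iff)
      ultimately show "z \<in> exp ` half_strip (ln \<rho>) \<alpha>" using assms Ln_mem_half_strip by blast
    qed
    show "exp ` half_strip (ln \<rho>) \<alpha> \<subseteq> sector \<rho> \<alpha>"
      using assms True by (auto intro: exp_mem_sector)
  qed
  moreover have "inj_on exp (half_strip (ln \<rho>) \<alpha>)"
    using assms by (intro inj_on_inverseI[of _ Ln] Ln_exp) (auto simp: half_strip_def)
  ultimately show ?thesis
    using open_mapping_thm3[OF holomorphic_on_exp open_half_strip] by simp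
next
  case False
  hence "sector \<rho> \<alpha> = {}"
    using assms by (auto simp: mem_sector_iff dest: le_less_trans[OF norm_ge_zero])
  thus ?thesis by simp
qed

lemma filterlim_uminus_Re_Ln_at_0: "filterlim (\<lambda>y. - Re (Ln y)) at_top (at 0 within S)"
proof -
  have "filterlim norm (at_right 0) (at (0::complex) within S)"
    unfolding filterlim_at
    by (auto simp: eventually_at_filter intro!: tendsto_norm_zero)
  hence "filterlim (\<lambda>y. ln (norm y)) at_bot (at (0::complex) within S)"
    by (rule filterlim_compose[OF ln_at_0])
  hence "filterlim (\<lambda>y. - ln (norm y)) at_top (at (0::complex) within S)"
    by (simp add: filterlim_uminus_at_bot)
  moreover have "eventually (\<lambda>y. - ln (norm y) = - Re (Ln y)) (at (0::complex) within S)"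
    by (auto simp: eventually_at_filter)
  ultimately show ?thesis by (simp add: filterlim_cong)
qed

lemma abs_Im_Ln_le:
  assumes "0 < Re v"
  shows "\<bar>Im (Ln v)\<bar> \<le> \<bar>Im v\<bar> / Re v"
proof -
  have "v \<noteq> 0" using assms by auto
  hence "Im (Ln v) = arctan (Im v / Re v)"
    using assms by (simp add: Arg_eq_Im_Ln[symmetric] arg_conv_arctan)
  hence "\<bar>Im (Ln v)\<bar> \<le> \<bar>Im v / Re v\<bar>" by (metis abs_arctan_le)
  thus ?thesis using assms by (simp add: abs_divide)
qed

lemma norm_Ln_le:
  assumes "1 \<le> norm z"
  shows "norm (Ln z) \<le> ln (norm z) + pi"
proof -
  have "z \<noteq> 0" using assms by auto
  have "norm (Ln z) \<le> \<bar>Re (Ln z)\<bar> + \<bar>Im (Ln z)\<bar>" by (rule cmod_le)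
  moreover have "\<bar>Im (Ln z)\<bar> \<le> pi"
    using mpi_less_Im_Ln[OF \<open>z \<noteq> 0\<close>] Im_Ln_le_pi[OF \<open>z \<noteq> 0\<close>] by auto
  ultimately show ?thesis using assms \<open>z \<noteq> 0\<close> by simp
qed

lemma norm_Ln_diff_le:
  assumes "0 < m" "m \<le> Re u" "m \<le> Re v"
  shows "norm (Ln u - Ln v) \<le> norm (u - v) / m"
proof -
  let ?S = "{z. m \<le> Re z}"
  have "norm (Ln u - Ln v) \<le> (1 / m) * norm (u - v)"
  proof (rule field_differentiable_bound[of ?S Ln inverse])
    show "convex ?S" by (rule convex_halfspace_Re_ge)
    fix z assume z: "z \<in> ?S"
    hence "z \<notin> \<real>\<^sub>\<le>\<^sub>0" using assms by (auto simp: complex_nonpos_Reals_iff)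
    thus "(Ln has_field_derivative inverse z) (at z within ?S)"
      by (rule has_field_derivative_at_within[OF has_field_derivative_Ln])
    have "m \<le> norm z" using z complex_Re_le_cmod[of z] by auto
    thus "norm (inverse z) \<le> 1 / m"
      using assms(1) by (simp add: norm_inverse inverse_eq_divide norm_divide frac_le)
  qed (use assms in auto)
  thus ?thesis by simp
qed

lemma norm_Ln_one_plus_le:
  fixes t :: complex
  assumes "norm t \<le> 1/2"
  shows "norm (Ln (1 + t)) \<le> 2 * norm t"
proof -
  have "norm t ^ 2 \<le> norm t * (1 - norm t)"
    using assms by (simp add: power2_eq_square mult_left_mono)
  hence "norm t ^ 2 / (1 - norm t) \<le> norm t" using assms by (simp add: divide_le_eq)
  moreover have "norm (Ln (1 + t) - t) \<le> norm t ^ 2 / (1 - norm t)"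
    using assms by (intro Ln_approx_linear) auto
  ultimately have "norm (Ln (1 + t) - t) \<le> norm t" by linarith
  thus ?thesis using norm_triangle_ineq[of "Ln (1 + t) - t" t] by simp
qed

lemma holomorphic_bounded_imp_lipschitz:
  fixes E :: "complex \<Rightarrow> complex"
  assumes "E holomorphic_on S" "\<And>u. u \<in> S \<Longrightarrow> norm (E u) < B"
    and "convex V" "0 < r" "\<And>u. u \<in> V \<Longrightarrow> cball u r \<subseteq> S"
    and "u \<in> V" "v \<in> V"
  shows "norm (E u - E v) \<le> B / r * norm (u - v)"
proof (rule field_differentiable_bound[OF \<open>convex V\<close> _ _ \<open>u \<in> V\<close> \<open>v \<in> V\<close>])
  fix z assume z: "z \<in> V"
  have "E holomorphic_on ball z r"
    using assms(1) assms(5)[OF z] ball_subset_cball holomorphic_on_subset by blast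
  thus "(E has_field_derivative deriv E z) (at z within V)"
    using assms(4) by (intro holomorphic_derivI) auto
  have "norm ((deriv ^^ 1) E z) \<le> fact 1 * B / r ^ 1"
  proof (rule Cauchy_higher_deriv_bound)
    show "E holomorphic_on ball z r" by fact
    show "continuous_on (cball z r) E"
      using assms(1) assms(5)[OF z] holomorphic_on_imp_continuous_on holomorphic_on_subset by blast
    show "E w \<in> ball 0 B" if "w \<in> ball z r" for w
    proof -
      have "w \<in> S" using that assms(5)[OF z] ball_subset_cball by blast
      thus ?thesis using assms(2) by simp
    qed
  qed (use assms in auto)
  thus "norm (deriv E z) \<le> B / r" by simp
qed

lemma inj_on_add_contraction:
  fixes G :: "'a::real_normed_vector \<Rightarrow> 'a"
  assumes "k < 1" "\<And>u v. u \<in> V \<Longrightarrow> v \<in> V \<Longrightarrow> norm (G u - G v) \<le> k * norm (u - v)"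
  shows "inj_on (\<lambda>u. u + G u) V"
proof (rule inj_onI)
  fix u v assume uv: "u \<in> V" "v \<in> V" "u + G u = v + G v"
  hence "u - v = G v - G u" by (simp add: algebra_simps)
  hence "norm (u - v) \<le> k * norm (u - v)"
    using assms(2)[OF uv(2,1)] by (simp add: norm_minus_commute)
  hence "(1 - k) * norm (u - v) \<le> 0" by (simp add: algebra_simps)
  thus "u = v" using assms(1) by (simp add: mult_le_0_iff)
qed

lemma exists_add_contraction_eq:
  fixes G :: "'a::banach \<Rightarrow> 'a"
  assumes "0 \<le> k" "k < 1" "cball u\<^sub>0 r \<subseteq> V"
    and lip: "\<And>u v. u \<in> V \<Longrightarrow> v \<in> V \<Longrightarrow> norm (G u - G v) \<le> k * norm (u - v)"
    and "norm (u\<^sub>0 + G u\<^sub>0 - w) \<le> (1 - k) * r"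
  shows "\<exists>u\<in>cball u\<^sub>0 r. u + G u = w"
proof -
  let ?T = "\<lambda>u. w - G u"
  have "\<exists>!u\<in>cball u\<^sub>0 r. ?T u = u"
  proof (rule Banach_fix[OF _ _ assms(1,2)])
    show "complete (cball u\<^sub>0 r)" by (simp add: complete_eq_closed)
    have "0 \<le> (1 - k) * r" using assms(5) norm_ge_zero order_trans by blast
    hence "0 \<le> r" using assms(2) by (simp add: zero_le_mult_iff)
    thus "cball u\<^sub>0 r \<noteq> {}" by simp
    show "?T ` cball u\<^sub>0 r \<subseteq> cball u\<^sub>0 r"
    proof clarify
      fix u assume u: "u \<in> cball u\<^sub>0 r"
      have "u\<^sub>0 \<in> V" "u \<in> V" using u \<open>0 \<le> r\<close> assms(3) by auto
      hence "norm (G u\<^sub>0 - G u) \<le> k * norm (u\<^sub>0 - u)" by (rule lip)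
      also have "\<dots> \<le> k * r" using u assms(1) by (simp add: dist_norm mult_left_mono)
      finally have "norm (G u\<^sub>0 - G u) \<le> k * r" .
      moreover have "norm (?T u - u\<^sub>0) \<le> norm (G u\<^sub>0 - G u) + norm (u\<^sub>0 + G u\<^sub>0 - w)"
        using norm_triangle_ineq4[of "G u\<^sub>0 - G u" "u\<^sub>0 + G u\<^sub>0 - w"] by (simp add: algebra_simps)
      ultimately have "norm (?T u - u\<^sub>0) \<le> k * r + (1 - k) * r"
        using assms(5) by linarith
      thus "?T u \<in> cball u\<^sub>0 r" by (simp add: dist_norm norm_minus_commute algebra_simps)
    qed
    fix u v assume "u \<in> cball u\<^sub>0 r" "v \<in> cball u\<^sub>0 r"
    hence "v \<in> V" "u \<in> V" using assms(3) by auto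
    thus "dist (?T u) (?T v) \<le> k * dist u v"
      using lip[of v u] by (simp add: dist_norm norm_minus_commute)
  qed
  thus ?thesis by (metis add_diff_cancel_right' diff_add_cancel)
qed

(* The bound on the distance of F^-1 w from w at depth X = - Re w: |a| + ln (X + pi) + pi
   bounds |a + Ln (- w)|, and 1 is the radius of the contraction ball. *)
definition approx_error :: "real \<Rightarrow> real \<Rightarrow> real" where
  "approx_error a X = \<bar>a\<bar> + ln (X + pi) + pi + 1"

lemma approx_error_asymptotics:
  shows "((\<lambda>X. approx_error a X / X) \<longlongrightarrow> 0) at_top"
    and "filterlim (\<lambda>X. X - approx_error a X) at_top at_top"
    and "((\<lambda>X. approx_error a X / (X - approx_error a X)) \<longlongrightarrow> 0) at_top"
  unfolding approx_error_def by real_asymp+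

lemma approx_error_ge_1:
  assumes "1 \<le> X"
  shows "1 \<le> approx_error a X"
proof -
  have "0 \<le> ln (X + pi)" using assms pi_gt_zero by (intro ln_ge_zero) linarith
  thus ?thesis using pi_gt_zero by (simp add: approx_error_def)
qed

lemma norm_plus_Ln_uminus_le:
  assumes "1 \<le> - Re w" "\<bar>Im w\<bar> \<le> pi"
  shows "norm (of_real a + Ln (- w)) \<le> approx_error a (- Re w) - 1"
proof -
  have "1 \<le> norm w" using assms(1) abs_Re_le_cmod[of w] by linarith
  moreover have "norm w \<le> - Re w + pi" using cmod_le[of w] assms by linarith
  ultimately have "ln (norm w) \<le> ln (- Re w + pi)" by (intro ln_mono) auto
  moreover have "norm (Ln (- w)) \<le> ln (norm w) + pi" using \<open>1 \<le> norm w\<close> norm_Ln_le[of "- w"] by simp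
  ultimately show ?thesis
    using norm_triangle_ineq[of "of_real a" "Ln (- w)"] by (simp add: approx_error_def)
qed

(* Depths X = - Re w at which the contraction argument solving F u = w goes through. *)
definition admissible_depth :: "real \<Rightarrow> real \<Rightarrow> real \<Rightarrow> real \<Rightarrow> bool" where
  "admissible_depth a r M X \<longleftrightarrow> 1 \<le> X \<and> pi / X \<le> r \<and> M + 2 < X - approx_error a X \<and>
     approx_error a X / (X - approx_error a X) \<le> r / 4"

lemma eventually_admissible_depth:
  assumes "0 < r"
  shows "eventually (admissible_depth a r M) at_top"
proof -
  have "((\<lambda>X::real. pi / X) \<longlongrightarrow> 0) at_top" by real_asymp
  hence "eventually (\<lambda>X. pi / X < r) at_top" using assms by (rule order_tendstoD)
  moreover have "eventually (\<lambda>X. approx_error a X / (X - approx_error a X) < r / 4) at_top"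
    using assms by (intro order_tendstoD(2)[OF approx_error_asymptotics(3)]) simp
  moreover have "eventually (\<lambda>X. M + 2 < X - approx_error a X) at_top"
    using approx_error_asymptotics(2) by (simp add: filterlim_at_top_dense)
  ultimately show ?thesis
    using eventually_ge_at_top[of 1] unfolding admissible_depth_def by eventually_elim auto
qed

definition log_ratio :: "(complex \<Rightarrow> complex) \<Rightarrow> real \<Rightarrow> complex \<Rightarrow> complex" where
  "log_ratio \<psi> c u = \<psi> (exp u) / (- of_real c * exp u * u)"

lemma eventually_log_ratio_near_1:
  assumes "\<psi> \<sim>[at 0 within sector s \<alpha>] (\<lambda>z. - of_real c * z * Ln z)"
    and "c \<noteq> 0" "0 < s" "\<alpha> \<le> pi" "0 < \<epsilon>"
  shows "eventually (\<lambda>M. \<forall>u \<in> half_strip (-M) \<alpha>. norm (log_ratio \<psi> c u - 1) < \<epsilon>) at_top"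
proof -
  have "eventually (\<lambda>z. - of_real c * z * Ln z \<noteq> 0) (at 0 within sector s \<alpha>)"
    unfolding eventually_at
  proof (intro exI[of _ 1] conjI ballI impI)
    fix z :: complex assume "z \<noteq> 0 \<and> dist z 0 < 1"
    moreover from this have "Ln z \<noteq> 0"
      using exp_Ln[of z] by (auto simp del: exp_Ln)
    ultimately show "- of_real c * z * Ln z \<noteq> 0" using assms(2) by simp
  qed simp
  hence "((\<lambda>z. \<psi> z / (- of_real c * z * Ln z)) \<longlongrightarrow> 1) (at 0 within sector s \<alpha>)"
    by (intro asymp_equivD_strong[OF assms(1)]) (auto elim: eventually_mono)
  from tendstoD[OF this assms(5)] obtain d where d: "0 < d"
    "\<And>z. z \<in> sector s \<alpha> \<Longrightarrow> z \<noteq> 0 \<Longrightarrow> norm z < d \<Longrightarrow>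
       dist (\<psi> z / (- of_real c * z * Ln z)) 1 < \<epsilon>"
    unfolding eventually_at by auto
  show ?thesis unfolding eventually_at_top_linorder
  proof (intro exI[of _ "max (- ln s) (- ln d)"] allI impI ballI)
    fix M u assume "max (- ln s) (- ln d) \<le> M" and u: "u \<in> half_strip (-M) \<alpha>"
    hence "u \<in> half_strip (ln s) \<alpha>" "Re u < ln d" by (auto simp: half_strip_def)
    hence "exp u \<in> sector s \<alpha>" "norm (exp u) < d"
      using assms(3,4) d(1) exp_mem_sector by (auto simp: exp_less_cancel_iff[of _ "ln d", symmetric])
    moreover have "Ln (exp u) = u" using u assms(4) by (intro Ln_exp) (auto simp: half_strip_def)
    ultimately show "norm (log_ratio \<psi> c u - 1) < \<epsilon>"
      using d(2)[of "exp u"] by (simp add: log_ratio_def dist_norm)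
  qed
qed

locale inversion_constants =
  fixes a \<alpha> \<beta> r M K :: real
  assumes alpha_le_pi: "\<alpha> \<le> pi"
    and beta_pos: "0 < \<beta>" and beta_r_le: "\<beta> + 4 * r \<le> \<alpha>"
    and r_pos: "0 < r" and r_le_1: "r \<le> 1"
    and M_pos: "0 < M" and pi_div_M_le: "pi / M \<le> r / 4"
    and K_large: "\<And>X. K \<le> X \<Longrightarrow> admissible_depth a r M X"
begin

lemma M_ge_4: "4 \<le> M"
proof -
  have "4 * pi \<le> r * M" using pi_div_M_le M_pos by (simp add: field_simps)
  also have "\<dots> \<le> M" using r_le_1 M_pos by simp
  finally show ?thesis using pi_gt3 by linarith
qed

lemma beta_less_pi: "\<beta> < pi"
  using beta_r_le r_pos alpha_le_pi by linarith

end

(* For a = ln c and E = Ln o log_ratio psi c, F is a logarithm of psi o exp (lemma exp_F). *)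
locale perturbed_log = inversion_constants +
  fixes E :: "complex \<Rightarrow> complex"
  assumes E_holomorphic: "E holomorphic_on half_strip (-M) \<alpha>"
    and E_small: "\<And>u. u \<in> half_strip (-M) \<alpha> \<Longrightarrow> norm (E u) < r / 4"
begin

definition F :: "complex \<Rightarrow> complex" where
  "F u = u + of_real a + Ln (- u) + E u"

abbreviation V :: "complex set" where
  "V \<equiv> half_strip (- (M + 1)) (\<alpha> - r)"

lemma V_subset: "V \<subseteq> half_strip (-M) \<alpha>"
  using r_pos by (intro half_strip_mono) auto

lemma F_holomorphic: "F holomorphic_on half_strip (-M) \<alpha>"
proof -
  have "- u \<notin> \<real>\<^sub>\<le>\<^sub>0" if "u \<in> half_strip (-M) \<alpha>" for u
    using that M_pos by (auto simp: half_strip_def complex_nonpos_Reals_iff)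
  hence "(\<lambda>u. Ln (- u)) holomorphic_on half_strip (-M) \<alpha>"
    by (intro holomorphic_on_Ln' holomorphic_intros)
  thus ?thesis unfolding F_def[abs_def]
    by (intro holomorphic_on_add holomorphic_on_ident holomorphic_on_const E_holomorphic)
qed

lemma lipschitz_F_minus_id:
  assumes "u \<in> V" "v \<in> V"
  shows "norm ((F u - u) - (F v - v)) \<le> 1/2 * norm (u - v)"
proof -
  have "norm (Ln (- u) - Ln (- v)) \<le> norm (- u - - v) / (M + 1)"
    using assms M_pos by (intro norm_Ln_diff_le) (auto simp: half_strip_def)
  also have "\<dots> = norm (u - v) / (M + 1)" by (simp add: norm_minus_commute)
  also have "\<dots> \<le> norm (u - v) / 4" using M_ge_4 by (intro divide_left_mono) auto
  finally have Ln_lip: "norm (Ln (- u) - Ln (- v)) \<le> 1/4 * norm (u - v)" by simp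
  have "\<And>w. w \<in> V \<Longrightarrow> cball w r \<subseteq> half_strip (-M) \<alpha>"
    using r_le_1 by (intro cball_subset_half_strip) (auto simp: half_strip_def)
  hence "norm (E u - E v) \<le> (r / 4) / r * norm (u - v)"
    using assms r_pos
    by (intro holomorphic_bounded_imp_lipschitz[OF E_holomorphic E_small convex_half_strip])
  hence E_lip: "norm (E u - E v) \<le> 1/4 * norm (u - v)" using r_pos by simp
  have "(F u - u) - (F v - v) = (Ln (- u) - Ln (- v)) + (E u - E v)" by (simp add: F_def)
  thus ?thesis using norm_triangle_ineq[of "Ln (- u) - Ln (- v)" "E u - E v"] Ln_lip E_lip by simp
qed

lemma inj_on_F: "inj_on F V"
  using inj_on_add_contraction[of "1/2" V "\<lambda>u. F u - u"] lipschitz_F_minus_id by simp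

lemma abs_Im_F_minus_Im_le:
  assumes "u \<in> half_strip (-M) \<alpha>"
  shows "\<bar>Im (F u) - Im u\<bar> \<le> r / 2"
proof -
  have "\<bar>Im (Ln (- u))\<bar> \<le> \<bar>Im u\<bar> / (- Re u)"
    using abs_Im_Ln_le[of "- u"] assms M_pos by (auto simp: half_strip_def)
  also have "\<dots> \<le> pi / M"
    using assms alpha_le_pi M_pos by (intro frac_le) (auto simp: half_strip_def)
  finally have "\<bar>Im (Ln (- u))\<bar> \<le> r / 4" using pi_div_M_le by linarith
  moreover have "\<bar>Im (E u)\<bar> \<le> r / 4" using abs_Im_le_cmod[of "E u"] E_small[OF assms] by linarith
  ultimately show ?thesis
    using abs_triangle_ineq[of "Im (Ln (- u))" "Im (E u)"] by (simp add: F_def)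
qed

(* The solution of F u = w with Ln (- u) replaced by Ln (- w) and E dropped; the contraction
   argument starts from it. *)
definition approx_solution :: "complex \<Rightarrow> complex" where
  "approx_solution w = w - of_real a - Ln (- w)"

context
  fixes w assumes w: "w \<in> half_strip (-K) \<beta>"
begin

private lemma Re_w_large: "1 \<le> - Re w" "pi / (- Re w) \<le> r" "M + 2 < - Re w - approx_error a (- Re w)"
    "approx_error a (- Re w) / (- Re w - approx_error a (- Re w)) \<le> r / 4"
  using K_large[of "- Re w"] w by (auto simp: half_strip_def admissible_depth_def)

lemma norm_approx_solution_diff_le: "norm (approx_solution w - w) \<le> approx_error a (- Re w) - 1"
proof -
  have "norm (approx_solution w - w) = norm (of_real a + Ln (- w))"
    using norm_minus_cancel[of "of_real a + Ln (- w)"] by (simp add: approx_solution_def)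
  thus ?thesis
    using norm_plus_Ln_uminus_le[of w a] Re_w_large(1) w beta_less_pi by (simp add: half_strip_def)
qed

lemma cball_approx_solution_subset: "cball (approx_solution w) r \<subseteq> V"
proof (rule cball_subset_half_strip)
  have "\<bar>Im (Ln (- w))\<bar> \<le> \<bar>Im w\<bar> / (- Re w)"
    using abs_Im_Ln_le[of "- w"] Re_w_large(1) by simp
  also have "\<dots> \<le> pi / (- Re w)"
    using w beta_less_pi Re_w_large(1) by (intro divide_right_mono) (auto simp: half_strip_def)
  finally have "\<bar>Im (Ln (- w))\<bar> \<le> r" using Re_w_large(2) by linarith
  hence "\<bar>Im (approx_solution w)\<bar> < \<alpha> - r - r"
    using w beta_r_le by (auto simp: approx_solution_def half_strip_def)
  moreover have "\<bar>Re (approx_solution w - w)\<bar> \<le> approx_error a (- Re w) - 1"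
    using norm_approx_solution_diff_le abs_Re_le_cmod order_trans by blast
  hence "Re (approx_solution w) < - (M + 1) - r" using Re_w_large(3) r_le_1 by simp
  ultimately show "approx_solution w \<in> half_strip (- (M + 1) - r) (\<alpha> - r - r)"
    by (simp add: half_strip_def)
qed

lemma norm_F_approx_solution_diff_le: "norm (F (approx_solution w) - w) \<le> r / 2"
proof -
  let ?u = "approx_solution w"
  have "?u \<in> V" using cball_approx_solution_subset r_pos by auto
  hence "\<bar>Re (?u - w)\<bar> \<le> approx_error a (- Re w) - 1"
    using norm_approx_solution_diff_le abs_Re_le_cmod order_trans by blast
  hence "- Re w - approx_error a (- Re w) \<le> Re (- ?u)" by simp
  hence "norm (Ln (- ?u) - Ln (- w)) \<le> norm (- ?u - - w) / (- Re w - approx_error a (- Re w))"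
    using Re_w_large(1,3) M_pos approx_error_ge_1[OF Re_w_large(1), where a=a] by (intro norm_Ln_diff_le) auto
  also have "\<dots> \<le> approx_error a (- Re w) / (- Re w - approx_error a (- Re w))"
    using norm_approx_solution_diff_le Re_w_large(3) M_pos approx_error_ge_1[OF Re_w_large(1), where a=a]
    by (intro divide_right_mono) (auto simp: norm_minus_commute)
  finally have "norm (Ln (- ?u) - Ln (- w)) \<le> r / 4" using Re_w_large(4) by linarith
  moreover have "norm (E ?u) < r / 4" using \<open>?u \<in> V\<close> V_subset E_small by blast
  moreover have "F ?u - w = (Ln (- ?u) - Ln (- w)) + E ?u"
    by (simp add: F_def approx_solution_def)
  ultimately show ?thesis using norm_triangle_ineq[of "Ln (- ?u) - Ln (- w)" "E ?u"] by simp
qed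

lemma F_solvable: "\<exists>u\<in>V. F u = w \<and> norm (u - w) \<le> approx_error a (- Re w)"
proof -
  obtain u where u: "u \<in> cball (approx_solution w) r" "u + (F u - u) = w"
    using exists_add_contraction_eq[of "1/2" "approx_solution w" r V "\<lambda>u. F u - u" w]
      cball_approx_solution_subset lipschitz_F_minus_id norm_F_approx_solution_diff_le by auto
  have "norm (u - w) \<le> norm (u - approx_solution w) + norm (approx_solution w - w)"
    using norm_triangle_ineq[of "u - approx_solution w" "approx_solution w - w"] by simp
  also have "\<dots> \<le> r + (approx_error a (- Re w) - 1)"
    using u(1) norm_approx_solution_diff_le by (intro add_mono) (auto simp: dist_norm norm_minus_commute)
  finally have "norm (u - w) \<le> approx_error a (- Re w)" using r_le_1 by simp
  moreover have "u \<in> V" using u(1) cball_approx_solution_subset by blast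
  ultimately show ?thesis using u(2) by (intro bexI[of _ u]) auto
qed

end

lemma F_inv_solution:
  assumes "w \<in> half_strip (-K) \<beta>"
  shows "inv_into V F w \<in> V" "F (inv_into V F w) = w"
    and "norm (inv_into V F w - w) \<le> approx_error a (- Re w)"
proof -
  obtain u where "u \<in> V" "F u = w" "norm (u - w) \<le> approx_error a (- Re w)"
    using F_solvable[OF assms] by blast
  moreover from this have "inv_into V F w = u" using inj_on_F by (auto intro: inv_into_f_f)
  ultimately show "inv_into V F w \<in> V" "F (inv_into V F w) = w"
    and "norm (inv_into V F w - w) \<le> approx_error a (- Re w)" by simp_all
qed

lemma half_strip_subset_image_F: "half_strip (-K) \<beta> \<subseteq> F ` V"
proof
  fix w assume "w \<in> half_strip (-K) \<beta>"
  from F_inv_solution(1,2)[OF this] show "w \<in> F ` V" by (rule rev_image_eqI[OF _ sym])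
qed

lemma F_inv_holomorphic: "inv_into V F holomorphic_on F ` V"
proof -
  obtain g where "g holomorphic_on F ` V" "\<And>u. u \<in> V \<Longrightarrow> g (F u) = u"
    using holomorphic_has_inverse[OF holomorphic_on_subset[OF F_holomorphic V_subset]
        open_half_strip inj_on_F] by metis
  moreover have "inv_into V F (F u) = g (F u)" if "u \<in> V" for u
    using that inj_on_F calculation(2) by simp
  ultimately show ?thesis by (auto intro: holomorphic_transform)
qed

end

locale sector_inverse = inversion_constants "ln c" \<alpha> \<beta> r M K for c \<alpha> \<beta> r M K :: real +
  fixes \<psi> :: "complex \<Rightarrow> complex" and s :: real
  assumes psi_holomorphic: "\<psi> holomorphic_on sector s \<alpha>"
    and psi_asymp: "\<psi> \<sim>[at 0 within sector s \<alpha>] (\<lambda>z. - of_real c * z * Ln z)"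
    and c_pos: "0 < c" and exp_M_le: "exp (- M) \<le> s"
    and log_ratio_near_1: "\<And>u. u \<in> half_strip (-M) \<alpha> \<Longrightarrow> norm (log_ratio \<psi> c u - 1) < r / 8"
begin

lemma s_pos: "0 < s"
  using exp_M_le exp_gt_zero[of "- M"] by linarith

lemma exp_mem_sector_s: "u \<in> half_strip (-M) \<alpha> \<Longrightarrow> exp u \<in> sector s \<alpha>"
  using exp_M_le s_pos alpha_le_pi
  by (intro exp_mem_sector) (auto simp: half_strip_def ln_ge_iff intro: less_le_trans)

lemma log_ratio_not_nonpos_Reals:
  assumes "u \<in> half_strip (-M) \<alpha>"
  shows "log_ratio \<psi> c u \<notin> \<real>\<^sub>\<le>\<^sub>0"
proof -
  have "1 - Re (log_ratio \<psi> c u) < 1"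
    using abs_Re_le_cmod[of "log_ratio \<psi> c u - 1"] log_ratio_near_1[OF assms] r_le_1 by auto
  thus ?thesis by (auto simp: complex_nonpos_Reals_iff)
qed

lemma norm_Ln_log_ratio_less:
  assumes "u \<in> half_strip (-M) \<alpha>"
  shows "norm (Ln (log_ratio \<psi> c u)) < r / 4"
  using norm_Ln_one_plus_le[of "log_ratio \<psi> c u - 1"] log_ratio_near_1[OF assms] r_le_1 by simp

lemma log_ratio_holomorphic: "log_ratio \<psi> c holomorphic_on half_strip (-M) \<alpha>"
proof -
  have "(\<psi> \<circ> exp) holomorphic_on half_strip (-M) \<alpha>"
    using exp_mem_sector_s
    by (intro holomorphic_on_compose_gen[OF holomorphic_on_exp psi_holomorphic]) auto
  moreover have "u \<noteq> 0" if "u \<in> half_strip (-M) \<alpha>" for u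
    using that M_pos by (auto simp: half_strip_def)
  ultimately show ?thesis
    unfolding log_ratio_def[abs_def] using c_pos by (intro holomorphic_intros) (auto simp: o_def)
qed

sublocale perturbed_log "ln c" \<alpha> \<beta> r M K "\<lambda>u. Ln (log_ratio \<psi> c u)"
proof
  show "(\<lambda>u. Ln (log_ratio \<psi> c u)) holomorphic_on half_strip (-M) \<alpha>"
    by (intro holomorphic_on_Ln' log_ratio_holomorphic log_ratio_not_nonpos_Reals)
qed (rule norm_Ln_log_ratio_less)

lemma psi_exp_eq:
  assumes "u \<in> half_strip (-M) \<alpha>"
  shows "\<psi> (exp u) = - of_real c * exp u * u * log_ratio \<psi> c u"
  using assms M_pos c_pos by (auto simp: log_ratio_def half_strip_def)

lemma exp_F:
  assumes "u \<in> half_strip (-M) \<alpha>"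
  shows "exp (F u) = \<psi> (exp u)"
proof -
  have "log_ratio \<psi> c u \<noteq> 0" using log_ratio_not_nonpos_Reals[OF assms] by auto
  moreover have "u \<noteq> 0" using assms M_pos by (auto simp: half_strip_def)
  ultimately show ?thesis
    using c_pos by (simp add: F_def exp_add exp_of_real psi_exp_eq[OF assms])
qed

definition \<rho> :: real where "\<rho> = exp (- (M + 1))"

definition \<rho>' :: real where "\<rho>' = exp (- K)"

definition \<Upsilon> :: "complex \<Rightarrow> complex" where
  "\<Upsilon> y = exp (inv_into V F (Ln y))"

lemma rho_less_s: "\<rho> < s"
proof -
  have "exp (- (M + 1)) < exp (- M)" by simp
  thus ?thesis using exp_M_le unfolding \<rho>_def by linarith
qed

lemma Ln_mem_half_strip_K: "y \<in> sector \<rho>' \<beta> \<Longrightarrow> Ln y \<in> half_strip (-K) \<beta>"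
  using Ln_mem_half_strip[of y \<rho>' \<beta>] beta_less_pi by (simp add: \<rho>'_def)

lemma F_inv_Ln:
  assumes "y \<in> sector \<rho>' \<beta>"
  shows "inv_into V F (Ln y) \<in> V" "F (inv_into V F (Ln y)) = Ln y"
    and "norm (inv_into V F (Ln y) - Ln y) \<le> approx_error (ln c) (- Re (Ln y))"
  using F_inv_solution[OF Ln_mem_half_strip_K[OF assms]] by auto

lemma Upsilon_analytic: "\<Upsilon> analytic_on sector \<rho>' \<beta>"
proof -
  have "Ln holomorphic_on sector \<rho>' \<beta>"
    using sector_not_nonpos_Reals beta_less_pi by (intro holomorphic_on_Ln) auto
  moreover have "Ln ` sector \<rho>' \<beta> \<subseteq> F ` V"
    using Ln_mem_half_strip_K half_strip_subset_image_F by blast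
  ultimately have "(inv_into V F \<circ> Ln) holomorphic_on sector \<rho>' \<beta>"
    by (rule holomorphic_on_compose_gen[OF _ F_inv_holomorphic])
  hence "(exp \<circ> (inv_into V F \<circ> Ln)) holomorphic_on sector \<rho>' \<beta>"
    by (rule holomorphic_on_compose[OF _ holomorphic_on_exp])
  hence "\<Upsilon> holomorphic_on sector \<rho>' \<beta>" by (simp add: \<Upsilon>_def[abs_def] o_def)
  thus ?thesis using open_sector beta_less_pi by (simp add: analytic_on_open)
qed

lemma Upsilon_mem_sector:
  assumes "y \<in> sector \<rho>' \<beta>"
  shows "\<Upsilon> y \<in> sector \<rho> \<alpha>"
  unfolding \<Upsilon>_def using F_inv_Ln(1)[OF assms] alpha_le_pi r_pos
  by (intro exp_mem_sector) (auto simp: \<rho>_def half_strip_def)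

lemma psi_Upsilon:
  assumes "y \<in> sector \<rho>' \<beta>"
  shows "\<psi> (\<Upsilon> y) = y"
proof -
  have "y \<noteq> 0" using assms beta_less_pi by (simp add: mem_sector_iff)
  have "\<psi> (\<Upsilon> y) = exp (F (inv_into V F (Ln y)))"
    unfolding \<Upsilon>_def using F_inv_Ln(1)[OF assms] V_subset by (intro exp_F[symmetric]) auto
  also have "\<dots> = y" using F_inv_Ln(2)[OF assms] \<open>y \<noteq> 0\<close> by simp
  finally show ?thesis .
qed

lemma F_Ln_eq_Ln:
  assumes y: "y \<in> sector \<rho>' \<beta>" and z: "z \<in> sector \<rho> \<alpha>" and "\<psi> z = y"
  shows "F (Ln z) = Ln y"
proof -
  have "z \<noteq> 0" "y \<noteq> 0" using y z beta_less_pi alpha_le_pi by (auto simp: mem_sector_iff)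
  have v: "Ln z \<in> half_strip (-M) \<alpha>"
    using Ln_mem_half_strip[OF z alpha_le_pi] by (auto simp: \<rho>_def half_strip_def)
  have "exp (F (Ln z)) = exp (Ln y)"
    using exp_F[OF v] \<open>\<psi> z = y\<close> \<open>z \<noteq> 0\<close> \<open>y \<noteq> 0\<close> by simp
  then obtain n :: int where n: "F (Ln z) = Ln y + of_int (2 * n) * pi * \<i>"
    by (auto simp: exp_eq)
  (* The branch index n vanishes since Im (F v) differs from Im v by at most r/2
     and alpha + beta + r/2 < 2 pi. *)
  have "\<bar>2 * of_int n * pi\<bar> \<le> \<bar>Im (F (Ln z)) - Im (Ln z)\<bar> + \<bar>Im (Ln z)\<bar> + \<bar>Im (Ln y)\<bar>"
    using n by simp
  also have "\<dots> < r / 2 + \<alpha> + \<beta>"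
    using abs_Im_F_minus_Im_le[OF v] v Ln_mem_half_strip_K[OF y] by (auto simp: half_strip_def)
  also have "\<dots> \<le> 2 * pi" using beta_r_le alpha_le_pi beta_less_pi by linarith
  finally have "\<bar>of_int n\<bar> < (1::real)" by (simp add: abs_mult)
  thus ?thesis using n by simp
qed

lemma Upsilon_unique:
  assumes y: "y \<in> sector \<rho>' \<beta>" and z: "z \<in> sector \<rho> \<alpha>" and "\<psi> z = y"
  shows "z = \<Upsilon> y"
proof -
  have FLn: "F (Ln z) = Ln y" using F_Ln_eq_Ln[OF assms] .
  have v: "Ln z \<in> half_strip (- (M + 1)) \<alpha>"
    using Ln_mem_half_strip[OF z alpha_le_pi] by (simp add: \<rho>_def)
  hence "\<bar>Im (Ln y) - Im (Ln z)\<bar> \<le> r / 2"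
    using FLn abs_Im_F_minus_Im_le[of "Ln z"] M_pos by (auto simp: half_strip_def)
  moreover have "\<bar>Im (Ln y)\<bar> < \<beta>" using Ln_mem_half_strip_K[OF y] by (simp add: half_strip_def)
  ultimately have "\<bar>Im (Ln z)\<bar> < \<alpha> - r" using beta_r_le r_pos by linarith
  hence "Ln z \<in> V" using v by (simp add: half_strip_def)
  hence "inv_into V F (F (Ln z)) = Ln z" by (rule inv_into_f_f[OF inj_on_F])
  hence "inv_into V F (Ln y) = Ln z" using FLn by simp
  moreover have "z \<noteq> 0" using z alpha_le_pi by (simp add: mem_sector_iff)
  ultimately show ?thesis by (simp add: \<Upsilon>_def)
qed

lemma F_inv_Ln_over_Ln_tendsto:
  "((\<lambda>y. inv_into V F (Ln y) / Ln y) \<longlongrightarrow> 1) (at 0 within sector \<rho>' \<beta>)"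
proof -
  let ?L = "\<lambda>y. approx_error (ln c) (- Re (Ln y))"
  have "eventually (\<lambda>y. norm (inv_into V F (Ln y) / Ln y - 1) \<le> ?L y / (- Re (Ln y)))
      (at 0 within sector \<rho>' \<beta>)"
    unfolding eventually_at_filter
  proof (intro always_eventually allI impI)
    fix y assume y: "y \<in> sector \<rho>' \<beta>"
    have "1 \<le> - Re (Ln y)"
      using K_large[of "- Re (Ln y)"] Ln_mem_half_strip_K[OF y]
      by (auto simp: half_strip_def admissible_depth_def)
    hence "Ln y \<noteq> 0" by auto
    hence "inv_into V F (Ln y) / Ln y - 1 = (inv_into V F (Ln y) - Ln y) / Ln y"
      by (simp add: diff_divide_distrib)
    hence "norm (inv_into V F (Ln y) / Ln y - 1) = norm (inv_into V F (Ln y) - Ln y) / norm (Ln y)"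
      by (simp only: norm_divide)
    also have "\<dots> \<le> ?L y / (- Re (Ln y))"
    proof (rule frac_le[OF _ F_inv_Ln(3)[OF y]])
      show "0 \<le> ?L y" using approx_error_ge_1[OF \<open>1 \<le> - Re (Ln y)\<close>, where a="ln c"] by simp
      show "0 < - Re (Ln y)" "- Re (Ln y) \<le> norm (Ln y)"
        using \<open>1 \<le> - Re (Ln y)\<close> abs_Re_le_cmod[of "Ln y"] by linarith+
    qed
    finally show "norm (inv_into V F (Ln y) / Ln y - 1) \<le> ?L y / (- Re (Ln y))" .
  qed
  moreover have "((\<lambda>y. ?L y / (- Re (Ln y))) \<longlongrightarrow> 0) (at 0 within sector \<rho>' \<beta>)"
    by (rule filterlim_compose[OF approx_error_asymptotics(1) filterlim_uminus_Re_Ln_at_0])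
  ultimately have "((\<lambda>y. inv_into V F (Ln y) / Ln y - 1) \<longlongrightarrow> 0) (at 0 within sector \<rho>' \<beta>)"
    by (rule Lim_null_comparison)
  thus ?thesis by (simp add: LIM_zero_iff)
qed

lemma log_ratio_F_inv_Ln_tendsto:
  "((\<lambda>y. log_ratio \<psi> c (inv_into V F (Ln y))) \<longlongrightarrow> 1) (at 0 within sector \<rho>' \<beta>)"
proof (rule tendstoI)
  fix \<epsilon> :: real assume "0 < \<epsilon>"
  from eventually_log_ratio_near_1[OF psi_asymp _ s_pos alpha_le_pi this] c_pos
  obtain N where N: "\<And>u. u \<in> half_strip (-N) \<alpha> \<Longrightarrow> norm (log_ratio \<psi> c u - 1) < \<epsilon>"
    unfolding eventually_at_top_linorder by auto
  have "eventually (\<lambda>y. N < - Re (Ln y) - approx_error (ln c) (- Re (Ln y)))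
      (at 0 within sector \<rho>' \<beta>)"
    using filterlim_compose[OF approx_error_asymptotics(2) filterlim_uminus_Re_Ln_at_0]
    by (simp add: filterlim_at_top_dense)
  moreover have "eventually (\<lambda>y. y \<in> sector \<rho>' \<beta>) (at 0 within sector \<rho>' \<beta>)"
    by (simp add: eventually_at_filter)
  ultimately show "eventually (\<lambda>y. dist (log_ratio \<psi> c (inv_into V F (Ln y))) 1 < \<epsilon>)
      (at 0 within sector \<rho>' \<beta>)"
  proof eventually_elim
    case (elim y)
    have "\<bar>Re (inv_into V F (Ln y) - Ln y)\<bar> \<le> approx_error (ln c) (- Re (Ln y))"
      using F_inv_Ln(3)[OF elim(2)] abs_Re_le_cmod order_trans by blast
    moreover have "inv_into V F (Ln y) \<in> V" using F_inv_Ln(1)[OF elim(2)] .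
    ultimately have "inv_into V F (Ln y) \<in> half_strip (-N) \<alpha>"
      using elim(1) r_pos by (auto simp: half_strip_def)
    thus ?case using N by (simp add: dist_norm)
  qed
qed

lemma Upsilon_ratio_eq:
  assumes "y \<in> sector \<rho>' \<beta>"
  shows "\<Upsilon> y / (- y / (of_real c * Ln y)) =
    inverse (inv_into V F (Ln y) / Ln y * log_ratio \<psi> c (inv_into V F (Ln y)))"
proof -
  define u where "u = inv_into V F (Ln y)"
  define w where "w = Ln y"
  have u: "u \<in> half_strip (-M) \<alpha>" "F u = w" using F_inv_Ln[OF assms] V_subset by (auto simp: u_def w_def)
  have "y \<noteq> 0" using assms beta_less_pi by (simp add: mem_sector_iff)
  hence "y = \<psi> (exp u)" using exp_F[OF u(1)] u(2) by (simp add: w_def)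
  also have "\<dots> = - of_real c * exp u * u * log_ratio \<psi> c u" by (rule psi_exp_eq[OF u(1)])
  finally have y: "y = - of_real c * exp u * u * log_ratio \<psi> c u" .
  have "u \<noteq> 0" "log_ratio \<psi> c u \<noteq> 0"
    using u(1) M_pos log_ratio_not_nonpos_Reals[OF u(1)] by (auto simp: half_strip_def)
  moreover have "w \<noteq> 0"
    using Ln_mem_half_strip_K[OF assms] K_large[of K]
    by (auto simp: half_strip_def admissible_depth_def w_def)
  ultimately have "- y / (of_real c * w) = exp u * (u / w * log_ratio \<psi> c u)"
    using c_pos by (simp add: y)
  hence "exp u / (- y / (of_real c * w)) = inverse (u / w * log_ratio \<psi> c u)"
    by (simp add: divide_inverse)
  thus ?thesis by (simp add: \<Upsilon>_def u_def w_def)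
qed

lemma Upsilon_asymp_equiv: "\<Upsilon> \<sim>[at 0 within sector \<rho>' \<beta>] (\<lambda>y. - y / (of_real c * Ln y))"
proof (rule asymp_equivI')
  have "((\<lambda>y. inverse (inv_into V F (Ln y) / Ln y * log_ratio \<psi> c (inv_into V F (Ln y))))
      \<longlongrightarrow> 1) (at 0 within sector \<rho>' \<beta>)"
    using tendsto_inverse[OF tendsto_mult[OF F_inv_Ln_over_Ln_tendsto log_ratio_F_inv_Ln_tendsto]]
    by simp
  moreover have "eventually (\<lambda>y. y \<in> sector \<rho>' \<beta>) (at 0 within sector \<rho>' \<beta>)"
    by (simp add: eventually_at_filter)
  hence "eventually (\<lambda>y. inverse (inv_into V F (Ln y) / Ln y * log_ratio \<psi> c (inv_into V F (Ln y)))
      = \<Upsilon> y / (- y / (of_real c * Ln y))) (at 0 within sector \<rho>' \<beta>)"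
    by eventually_elim (rule Upsilon_ratio_eq[symmetric])
  ultimately show "((\<lambda>y. \<Upsilon> y / (- y / (of_real c * Ln y))) \<longlongrightarrow> 1) (at 0 within sector \<rho>' \<beta>)"
    by (rule Lim_transform_eventually)
qed

lemma inverse_exists:
  "\<exists>\<rho> \<rho>' \<Upsilon>. 0 < \<rho> \<and> \<rho> < s \<and> 0 < \<rho>' \<and>
     \<Upsilon> analytic_on sector \<rho>' \<beta> \<and> \<Upsilon> ` sector \<rho>' \<beta> \<subseteq> sector \<rho> \<alpha> \<and>
     (\<forall>y \<in> sector \<rho>' \<beta>. \<forall>z \<in> sector \<rho> \<alpha>. \<psi> z = y \<longleftrightarrow> z = \<Upsilon> y) \<and>
     \<Upsilon> \<sim>[at 0 within sector \<rho>' \<beta>] (\<lambda>y. - y / (of_real c * Ln y))"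
proof -
  have "\<forall>y \<in> sector \<rho>' \<beta>. \<forall>z \<in> sector \<rho> \<alpha>. \<psi> z = y \<longleftrightarrow> z = \<Upsilon> y"
    using psi_Upsilon Upsilon_unique by blast
  moreover have "\<Upsilon> ` sector \<rho>' \<beta> \<subseteq> sector \<rho> \<alpha>" using Upsilon_mem_sector by blast
  ultimately show ?thesis
    using rho_less_s Upsilon_analytic Upsilon_asymp_equiv
    by (intro exI[of _ \<rho>] exI[of _ \<rho>'] exI[of _ \<Upsilon>]) (auto simp: \<rho>_def \<rho>'_def)
qed

end

lemma sector_inverse_exists:
  assumes "\<psi> holomorphic_on sector s \<alpha>"
    and "\<psi> \<sim>[at 0 within sector s \<alpha>] (\<lambda>z. - of_real c * z * Ln z)"
    and "0 < s" "\<alpha> \<le> pi" "0 < c" "0 < \<beta>" "\<beta> < \<alpha>"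
  shows "\<exists>r M K. sector_inverse c \<alpha> \<beta> r M K \<psi> s"
proof -
  define r where "r = min 1 ((\<alpha> - \<beta>) / 4)"
  have "r \<le> (\<alpha> - \<beta>) / 4" unfolding r_def by (rule min.cobounded2)
  hence "\<beta> + 4 * r \<le> \<alpha>" by (simp add: field_simps)
  moreover have "0 < r" "r \<le> 1" using assms by (simp_all add: r_def)
  ultimately have r: "0 < r" "r \<le> 1" "\<beta> + 4 * r \<le> \<alpha>" by simp_all
  have "((\<lambda>M::real. pi / M) \<longlongrightarrow> 0) at_top" by real_asymp
  moreover have "0 < r / 4" using r(1) by simp
  ultimately have "eventually (\<lambda>M. pi / M < r / 4) at_top" by (rule order_tendstoD(2))
  moreover have "eventually (\<lambda>M. \<forall>u \<in> half_strip (-M) \<alpha>. norm (log_ratio \<psi> c u - 1) < r / 8) at_top"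
    using assms r(1) by (intro eventually_log_ratio_near_1) auto
  ultimately have "eventually (\<lambda>M. 0 < M \<and> - ln s \<le> M \<and> pi / M < r / 4 \<and>
      (\<forall>u \<in> half_strip (-M) \<alpha>. norm (log_ratio \<psi> c u - 1) < r / 8)) at_top"
    using eventually_gt_at_top[of 0] eventually_ge_at_top[of "- ln s"] by eventually_elim blast
  then obtain N where "\<And>M. N \<le> M \<Longrightarrow> 0 < M \<and> - ln s \<le> M \<and> pi / M < r / 4 \<and>
      (\<forall>u \<in> half_strip (-M) \<alpha>. norm (log_ratio \<psi> c u - 1) < r / 8)"
    unfolding eventually_at_top_linorder by blast
  from this[OF order_refl] obtain M where M: "0 < M" "- ln s \<le> M" "pi / M < r / 4"
    "\<And>u. u \<in> half_strip (-M) \<alpha> \<Longrightarrow> norm (log_ratio \<psi> c u - 1) < r / 8" by blast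
  have "exp (- M) \<le> exp (ln s)" using M(2) by simp
  hence "exp (- M) \<le> s" using assms(3) by simp
  obtain K where "\<And>X. K \<le> X \<Longrightarrow> admissible_depth (ln c) r M X"
    using eventually_admissible_depth[OF r(1), of "ln c" M]
    unfolding eventually_at_top_linorder by blast
  hence "sector_inverse c \<alpha> \<beta> r M K \<psi> s"
    using assms r M \<open>exp (- M) \<le> s\<close>
    by (intro sector_inverse.intro inversion_constants.intro sector_inverse_axioms.intro) simp_all
  thus ?thesis by blast
qed

theorem theorem6p2p1:
  fixes \<psi> :: "complex \<Rightarrow> complex" and s \<alpha> c :: real
  assumes "s > 0" and "pi / 2 < \<alpha>" and "\<alpha> \<le> pi"
    and "\<psi> analytic_on sector s \<alpha>"
    and "c > 0"
    and "\<psi> \<sim>[at 0 within sector s \<alpha>] (\<lambda>z. - of_real c * z * Ln z)"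
  shows "\<forall>\<beta>. 0 < \<beta> \<and> \<beta> < \<alpha> \<longrightarrow>
    (\<exists>\<rho> \<rho>' \<Upsilon>. 0 < \<rho> \<and> \<rho> < s \<and> 0 < \<rho>' \<and>
       \<Upsilon> analytic_on sector \<rho>' \<beta> \<and> \<Upsilon> ` sector \<rho>' \<beta> \<subseteq> sector \<rho> \<alpha> \<and>
       (\<forall>y \<in> sector \<rho>' \<beta>. \<forall>z \<in> sector \<rho> \<alpha>. \<psi> z = y \<longleftrightarrow> z = \<Upsilon> y) \<and>
       \<Upsilon> \<sim>[at 0 within sector \<rho>' \<beta>] (\<lambda>y. - y / (of_real c * Ln y)))"
  using sector_inverse_exists[OF analytic_imp_holomorphic[OF assms(4)] assms(6,1,3,5)]
    sector_inverse.inverse_exists by blast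

end
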